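(* Let $a_{12},a_{34},d>0$ with $d>\max\{a_{12},a_{34}\}$, and consider the isosceles trapezium with vertices $A_1'=(-a_{12}/2,\,d)$, $A_2'=(a_{12}/2,\,d)$, $A_4=(-a_{34}/2,\,0)$, $A_3=(a_{34}/2,\,0)$; let $M_{12}=(0,d)$, $M_{34}=(0,0)$. Let $F$ be the intersection of the diagonals $A_1'A_3$, $A_2'A_4$ and $\theta=\angle A_1'FA_2'$. Let $F_{12}$ be the orthocenter of triangle $A_1'FA_2'$, $F_{34}$ the orthocenter of triangle $A_4FA_3$, $w(\theta)=2\sin\frac{\theta}{2}$, and $$l_{minT}=2|A_1'F_{12}|+2|A_3F_{34}|+w(\theta)|F_{12}F_{34}|.$$ Let $O_{12},O_{34}$ be the points on segment $M_{12}M_{34}$ with $\angle A_1'O_{12}A_2'=120^\circ$ and $\angle A_4O_{34}A_3=120^\circ$, and $$l_{minST}=2|A_1'O_{12}|+2|A_3O_{34}|+|O_{12}O_{34}|.$$ If $0<\theta<60^\circ$, then $l_{minT}<l_{minST}$; and if $60^\circ<\theta<90^\circ$, then $l_{minT}>l_{minST}$.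
   Context: $|XY|$ denotes Euclidean distance. $l_{minST}$ is the length of the full (unweighted) Steiner tree of the trapezium with Steiner points $O_{12},O_{34}$; $l_{minT}$ is the weighted length of the paper's "construction tree" with interior points $F_{12},F_{34}$ carrying weight $w(\theta)$ on the segment $F_{12}F_{34}$. *)

theory Defs
  imports "HOL-Analysis.Analysis"
begin

definition vangle :: "'a::real_inner \<Rightarrow> 'a \<Rightarrow> real" where
  "vangle u v = arccos ((u \<bullet> v) / (norm u * norm v))"

definition angle :: "'a::real_inner \<Rightarrow> 'a \<Rightarrow> 'a \<Rightarrow> real" where
  "angle a b c = vangle (a - b) (c - b)"

definition is_orthocenter :: "'a::real_inner \<Rightarrow> 'a \<Rightarrow> 'a \<Rightarrow> 'a \<Rightarrow> bool" where
  "is_orthocenter H A B C \<longleftrightarrow>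
     (H - A) \<bullet> (B - C) = 0 \<and> (H - B) \<bullet> (A - C) = 0 \<and> (H - C) \<bullet> (A - B) = 0"

end

theory Submission
  imports Defs
begin

text \<open>
  Put \<open>p = a12 / 2\<close>, \<open>q = a34 / 2\<close> and \<open>t = (p + q) / d\<close>. All interior points lie on the
  symmetry axis and \<open>t = tan (\<theta> / 2)\<close>: the diagonals meet at \<open>F = (0, q / t)\<close>, the
  orthocentres are \<open>F12 = (0, d - p t)\<close> and \<open>F34 = (0, q t)\<close>, and the Steiner points are
  \<open>O12 = (0, d - p / sqrt 3)\<close> and \<open>O34 = (0, q / sqrt 3)\<close>. Hence
  \<open>lminT = 4 d t / sqrt (1 + t\<^sup>2)\<close> and \<open>lminST = d (1 + sqrt 3 t)\<close>. With \<open>s = sqrt 3 t\<close>,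
  the difference of their squares factors as \<open>(1 - s) (3 + 9 s - 3 s\<^sup>2 - s\<^sup>3) / 3\<close>, and the
  cubic factor is positive for \<open>0 \<le> s \<le> sqrt 3\<close>; so the comparison flips exactly at
  \<open>sqrt 3 t = 1\<close>, i.e. at \<open>\<theta> = pi / 3\<close>.
\<close>

lemma angle_isosceles_apex:
  fixes p y y0 :: real
  shows "angle (-p, y) (0, y0) (p, y) = arccos (((y - y0)^2 - p^2) / ((y - y0)^2 + p^2))"
proof -
  have "norm (-p, y - y0) * norm (p, y - y0) = (y - y0)^2 + p^2"
    by (simp add: norm_Pair add.commute)
  then show ?thesis
    by (simp add: angle_def vangle_def power2_eq_square)
qed

lemma arccos_half_tangent:
  fixes t :: real
  assumes "0 \<le> t"
  shows "arccos ((1 - t^2) / (1 + t^2)) = 2 * arctan t"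
proof -
  have pos: "0 < 1 + t^2" by (simp add: add_pos_nonneg)
  have "cos (2 * arctan t) = 2 * (1 / sqrt (1 + t^2))^2 - 1"
    by (simp add: cos_double_cos cos_arctan)
  also have "\<dots> = (1 - t^2) / (1 + t^2)"
    using pos by (simp add: field_simps)
  finally have "arccos ((1 - t^2) / (1 + t^2)) = arccos (cos (2 * arctan t))" by simp
  also have "\<dots> = 2 * arctan t"
    using assms arctan_bounded[of t] by (intro arccos_cos) auto
  finally show ?thesis .
qed

lemma angle_isosceles_apex_arctan:
  fixes p y y0 :: real
  assumes "0 \<le> p" "y \<noteq> y0"
  shows "angle (-p, y) (0, y0) (p, y) = 2 * arctan (p / \<bar>y - y0\<bar>)"
proof -
  define e where "e = \<bar>y - y0\<bar>"
  have "0 < e" using assms(2) by (simp add: e_def)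
  have "e^2 * (1 - (p / e)^2) = e^2 - p^2" "e^2 * (1 + (p / e)^2) = e^2 + p^2"
    using \<open>0 < e\<close> by (simp_all add: field_simps)
  then have "(e^2 - p^2) / (e^2 + p^2) = (1 - (p / e)^2) / (1 + (p / e)^2)"
    using \<open>0 < e\<close> by (metis mult_divide_mult_cancel_left_if power_not_zero less_irrefl)
  then show ?thesis
    using assms(1) \<open>0 < e\<close> by (simp add: angle_isosceles_apex arccos_half_tangent e_def)
qed

lemma angle_isosceles_apex_eq_2pi_div_3:
  fixes p y y0 :: real
  assumes "0 < p" and apex: "angle (-p, y) (0, y0) (p, y) = 2 * pi / 3"
  shows "\<bar>y - y0\<bar> = p / sqrt 3"
proof -
  have "y \<noteq> y0"
  proof
    assume "y = y0"
    then have "angle (-p, y) (0, y0) (p, y) = pi"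
      using assms(1) by (simp add: angle_isosceles_apex)
    then show False using apex by simp
  qed
  then have "arctan (p / \<bar>y - y0\<bar>) = arctan (tan (pi / 3))"
    using assms arctan_tan[of "pi / 3"] by (simp add: angle_isosceles_apex_arctan)
  then have "p / \<bar>y - y0\<bar> = sqrt 3"
    by (simp add: arctan_eq_iff tan_60)
  then show ?thesis
    using \<open>y \<noteq> y0\<close> by (simp add: field_simps)
qed

lemma is_orthocenter_isosceles:
  fixes p y y0 :: real
  assumes "p \<noteq> 0" "y0 \<noteq> y" "is_orthocenter H (-p, y) (0, y0) (p, y)"
  shows "H = (0, y - p^2 / (y - y0))"
proof -
  obtain hx hy where H: "H = (hx, hy)" by fastforce
  have "(hx + p) * (- p) + (hy - y) * (y0 - y) = 0" "hx * (- 2 * p) = 0"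
    using assms(3) unfolding is_orthocenter_def H by simp_all
  then have "hx = 0" "hy = y - p^2 / (y - y0)"
    using assms(1,2) by (auto simp: field_simps power2_eq_square)
  then show ?thesis using H by simp
qed

lemma diagonals_meet_on_axis:
  fixes p q d :: real and F :: "real \<times> real"
  assumes "0 < p + q" "d \<noteq> 0"
    and "F \<in> closed_segment (-p, d) (q, 0)" "F \<in> closed_segment (p, d) (-q, 0)"
  shows "F = (0, q * d / (p + q))"
proof -
  obtain u where Fu: "F = ((1 - u) * - p + u * q, (1 - u) * d)"
    using assms(3) by (auto simp: in_segment)
  moreover obtain v where "F = ((1 - v) * p + v * - q, (1 - v) * d)"
    using assms(4) by (auto simp: in_segment)
  ultimately have "u = v" "(1 - u) * - p + u * q = (1 - u) * p - u * q"
    using assms(2) by auto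
  then have "u * (p + q) = p"
    by (simp add: algebra_simps)
  then have "fst F = 0" "snd F = q * d / (p + q)"
    using assms(1) by (simp_all add: Fu field_simps)
  then show ?thesis
    by (simp add: prod_eq_iff)
qed

lemma closed_segment_vertical_axis:
  fixes d :: real and P :: "real \<times> real"
  assumes "0 \<le> d" "P \<in> closed_segment (0, d) (0, 0)"
  shows "P = (0, snd P)" "0 \<le> snd P" "snd P \<le> d"
  using closed_segment_PairD[of "fst P" "snd P" 0 d 0 0] assms
  by (auto simp: closed_segment_eq_real_ivl prod_eq_iff split: if_splits)

lemma construction_tree_length:
  fixes p q d t :: real
  assumes "0 < p" "0 < q" "0 < t" "t \<le> 1" "p + q = d * t"
  shows "2 * dist (-p, d) (0, d - p * t) + 2 * dist (q, 0) (0, q * t)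
           + 2 * t / sqrt (1 + t^2) * dist (0, d - p * t) (0, q * t)
         = d * (4 * t / sqrt (1 + t^2))"
proof -
  define S where "S = sqrt (1 + t^2)"
  have "0 < S" "S^2 = 1 + t^2" by (simp_all add: S_def add_pos_nonneg)
  have "0 < d" using assms by (metis add_pos_pos zero_less_mult_pos2)
  have "dist (-p, d) (0, d - p * t) = sqrt (p^2 * (1 + t^2))"
    "dist (q, 0) (0, q * t) = sqrt (q^2 * (1 + t^2))"
    by (simp_all add: dist_Pair_Pair dist_real_def algebra_simps)
  then have legs: "dist (-p, d) (0, d - p * t) = p * S" "dist (q, 0) (0, q * t) = q * S"
    using assms(1,2) by (simp_all add: S_def real_sqrt_mult)
  have "dist (0, d - p * t) (0, q * t) = \<bar>d - (p + q) * t\<bar>"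
    by (simp add: dist_Pair_Pair dist_real_def algebra_simps)
  then have trunk: "dist (0, d - p * t) (0, q * t) = d * (1 - t^2)"
    using assms(3-5) \<open>0 < d\<close> by (simp add: power2_eq_square algebra_simps mult_le_one)
  have "2 * dist (-p, d) (0, d - p * t) + 2 * dist (q, 0) (0, q * t)
          + 2 * t / S * dist (0, d - p * t) (0, q * t)
        = (2 * (p + q) * S^2 + 2 * t * (d * (1 - t^2))) / S"
    using \<open>0 < S\<close> by (simp add: legs trunk field_simps power2_eq_square)
  also have "\<dots> = d * (4 * t / S)"
    using \<open>S^2 = 1 + t^2\<close> assms(5) by (simp add: algebra_simps)
  finally show ?thesis
    by (simp add: S_def)
qed

lemma steiner_tree_length:
  fixes p q d t :: real
  assumes "0 < p" "0 < q" "0 < t" "t \<le> sqrt 3" "p + q = d * t"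
  shows "2 * dist (-p, d) (0, d - p / sqrt 3) + 2 * dist (q, 0) (0, q / sqrt 3)
           + dist (0, d - p / sqrt 3) (0, q / sqrt 3)
         = d * (1 + sqrt 3 * t)"
proof -
  have "0 < d" using assms by (metis add_pos_pos zero_less_mult_pos2)
  have "dist (-p, d) (0, d - p / sqrt 3) = sqrt ((2 * p / sqrt 3)^2)"
    "dist (q, 0) (0, q / sqrt 3) = sqrt ((2 * q / sqrt 3)^2)"
    by (simp_all add: dist_Pair_Pair dist_real_def power_divide power_mult_distrib)
  then have legs: "dist (-p, d) (0, d - p / sqrt 3) = 2 * p / sqrt 3"
    "dist (q, 0) (0, q / sqrt 3) = 2 * q / sqrt 3"
    using assms(1,2) by simp_all
  have "dist (0, d - p / sqrt 3) (0, q / sqrt 3) = \<bar>d - (p + q) / sqrt 3\<bar>"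
    by (simp add: dist_Pair_Pair dist_real_def add_divide_distrib algebra_simps)
  also have "\<dots> = d - (p + q) / sqrt 3"
    using assms(3-5) \<open>0 < d\<close> by (simp add: field_simps)
  finally have trunk: "dist (0, d - p / sqrt 3) (0, q / sqrt 3) = d - (p + q) / sqrt 3" .
  have "d * (1 + sqrt 3 * t) = d + sqrt 3 * (p + q)"
    using assms(5) by (simp add: algebra_simps)
  then show ?thesis
    unfolding legs trunk by (simp add: field_simps)
qed

lemma trapezium_construction_tree:
  fixes p q d t :: real and F F12 F34 :: "real \<times> real"
  assumes "0 < p" "0 < q" "0 < t" "t \<le> 1" "p + q = d * t"
    and "F \<in> closed_segment (-p, d) (q, 0)" "F \<in> closed_segment (p, d) (-q, 0)"
    and "is_orthocenter F12 (-p, d) F (p, d)" "is_orthocenter F34 (-q, 0) F (q, 0)"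
  shows "angle (-p, d) F (p, d) = 2 * arctan t"
    and "2 * dist (-p, d) F12 + 2 * dist (q, 0) F34
           + 2 * sin (angle (-p, d) F (p, d) / 2) * dist F12 F34
         = d * (4 * t / sqrt (1 + t^2))"
proof -
  have "d \<noteq> 0" "d - q / t = p / t" "q / t \<noteq> d"
    using assms(1-3,5) by (auto simp: field_simps)
  have F: "F = (0, q / t)"
    using diagonals_meet_on_axis[OF _ \<open>d \<noteq> 0\<close> assms(6,7)] assms(1-3,5) \<open>d \<noteq> 0\<close> by simp
  have "F12 = (0, d - p * t)"
    using is_orthocenter_isosceles[of p "q / t" d F12] assms(1,3,8) F \<open>d - q / t = p / t\<close>
      \<open>q / t \<noteq> d\<close> by (simp add: power2_eq_square)
  moreover have "F34 = (0, q * t)"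
    using is_orthocenter_isosceles[of q "q / t" 0 F34] assms(2,3,9) F
    by (simp add: power2_eq_square)
  moreover show apex: "angle (-p, d) F (p, d) = 2 * arctan t"
    using angle_isosceles_apex_arctan[of p d "q / t"] assms(1,3) F \<open>d - q / t = p / t\<close>
      \<open>q / t \<noteq> d\<close> by auto
  ultimately show "2 * dist (-p, d) F12 + 2 * dist (q, 0) F34
           + 2 * sin (angle (-p, d) F (p, d) / 2) * dist F12 F34
         = d * (4 * t / sqrt (1 + t^2))"
    using construction_tree_length[OF assms(1-5)] by (simp add: apex sin_arctan)
qed

lemma trapezium_steiner_tree:
  fixes p q d t :: real and O12 O34 :: "real \<times> real"
  assumes "0 < p" "0 < q" "0 < t" "t \<le> sqrt 3" "p + q = d * t"
    and "O12 \<in> closed_segment (0, d) (0, 0)" "angle (-p, d) O12 (p, d) = 2 * pi / 3"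
    and "O34 \<in> closed_segment (0, d) (0, 0)" "angle (-q, 0) O34 (q, 0) = 2 * pi / 3"
  shows "2 * dist (-p, d) O12 + 2 * dist (q, 0) O34 + dist O12 O34 = d * (1 + sqrt 3 * t)"
proof -
  have "0 \<le> d"
    using assms(1-3,5) by (metis add_pos_pos less_eq_real_def zero_less_mult_pos2)
  note O12 = closed_segment_vertical_axis[OF \<open>0 \<le> d\<close> assms(6)]
  note O34 = closed_segment_vertical_axis[OF \<open>0 \<le> d\<close> assms(8)]
  have "\<bar>d - snd O12\<bar> = p / sqrt 3"
    using angle_isosceles_apex_eq_2pi_div_3[of p d "snd O12"] assms(1,7) O12(1) by simp
  then have "O12 = (0, d - p / sqrt 3)"
    using O12 by (simp add: prod_eq_iff abs_if split: if_splits)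
  moreover have "\<bar>0 - snd O34\<bar> = q / sqrt 3"
    using angle_isosceles_apex_eq_2pi_div_3[of q 0 "snd O34"] assms(2,9) O34(1) by simp
  then have "O34 = (0, q / sqrt 3)"
    using O34 by (simp add: prod_eq_iff)
  ultimately show ?thesis
    using steiner_tree_length[OF assms(1-5)] by simp
qed

lemma tree_gap_factorization:
  fixes s t S :: real
  assumes "s^2 = 3 * t^2" "S^2 = 1 + t^2"
  shows "((1 + s) * S)^2 - (4 * t)^2 = (1 - s) * (3 + 9 * s - 3 * s^2 - s^3) / 3"
proof -
  have "3 * (((1 + s) * S)^2 - (4 * t)^2) = 3 * (1 + s)^2 + (1 + s)^2 * (3 * t^2) - 16 * (3 * t^2)"
    unfolding power_mult_distrib assms(2) by (simp add: algebra_simps)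
  also have "\<dots> = (1 - s) * (3 + 9 * s - 3 * s^2 - s^3)"
    unfolding assms(1)[symmetric] by (simp add: algebra_simps power2_eq_square power3_eq_cube)
  finally show ?thesis
    by simp
qed

lemma cubic_positive:
  fixes s :: real
  assumes "0 \<le> s" "s^2 \<le> 3"
  shows "0 < 3 + 9 * s - 3 * s^2 - s^3"
proof -
  have "s^3 \<le> 3 * s"
    using assms mult_right_mono[of "s^2" 3 s] by (simp add: power3_eq_cube power2_eq_square)
  moreover have "s^2 < 2^2"
    using assms(2) by simp
  then have "s < 2"
    by (rule power_less_imp_less_base) simp
  then have "s^2 \<le> 2 * s"
    using assms(1) by (simp add: power2_eq_square mult_right_mono)
  ultimately show ?thesis
    using assms(1) by linarith
qed

lemma construction_tree_shorter:
  fixes t :: real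
  assumes "0 \<le> t" "sqrt 3 * t < 1"
  shows "4 * t / sqrt (1 + t^2) < 1 + sqrt 3 * t"
proof -
  define s S where "s = sqrt 3 * t" and "S = sqrt (1 + t^2)"
  have "0 < S" "S^2 = 1 + t^2" "s^2 = 3 * t^2" "0 \<le> s" "s < 1"
    using assms by (simp_all add: S_def s_def add_pos_nonneg power_mult_distrib)
  have "0 < 3 + 9 * s - 3 * s^2 - s^3"
    using \<open>0 \<le> s\<close> \<open>s < 1\<close> power_le_one[of s 2] by (intro cubic_positive) simp_all
  then have "0 < (1 - s) * (3 + 9 * s - 3 * s^2 - s^3) / 3"
    using \<open>s < 1\<close> by simp
  then have "0 < ((1 + s) * S)^2 - (4 * t)^2"
    by (simp only: tree_gap_factorization[OF \<open>s^2 = 3 * t^2\<close> \<open>S^2 = 1 + t^2\<close>])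
  then have "(4 * t)^2 < ((1 + s) * S)^2"
    by simp
  then have "4 * t < (1 + s) * S"
    by (rule power_less_imp_less_base) (use \<open>0 \<le> s\<close> \<open>0 < S\<close> in simp)
  then show ?thesis
    using \<open>0 < S\<close> by (simp add: divide_less_eq s_def S_def)
qed

lemma construction_tree_longer:
  fixes t :: real
  assumes "1 < sqrt 3 * t" "t \<le> 1"
  shows "1 + sqrt 3 * t < 4 * t / sqrt (1 + t^2)"
proof -
  define s S where "s = sqrt 3 * t" and "S = sqrt (1 + t^2)"
  have "0 < sqrt 3 * t"
    using assms(1) by linarith
  then have "0 < t"
    by (simp add: zero_less_mult_iff)
  then have "0 < S" "S^2 = 1 + t^2" "s^2 = 3 * t^2" "1 < s" "t^2 \<le> 1"
    using assms power_le_one[of t 2] by (simp_all add: S_def s_def add_pos_nonneg power_mult_distrib)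
  moreover have "0 < 3 + 9 * s - 3 * s^2 - s^3"
    using \<open>0 < t\<close> \<open>1 < s\<close> \<open>s^2 = 3 * t^2\<close> \<open>t^2 \<le> 1\<close> by (intro cubic_positive) simp_all
  ultimately have "(1 - s) * (3 + 9 * s - 3 * s^2 - s^3) / 3 < 0"
    by (simp add: mult_neg_pos)
  then have "((1 + s) * S)^2 - (4 * t)^2 < 0"
    by (simp only: tree_gap_factorization[OF \<open>s^2 = 3 * t^2\<close> \<open>S^2 = 1 + t^2\<close>])
  then have "((1 + s) * S)^2 < (4 * t)^2"
    by simp
  then have "(1 + s) * S < 4 * t"
    by (rule power_less_imp_less_base) (use \<open>0 < t\<close> in simp)
  then show ?thesis
    using \<open>0 < S\<close> by (simp add: less_divide_eq s_def S_def)
qed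

lemma arctan_inverse_sqrt3: "arctan (1 / sqrt 3) = pi / 6"
  using arctan_tan[of "pi / 6"] by (simp add: tan_30)

lemma two_arctan_less_pi_div_3_iff: "2 * arctan t < pi / 3 \<longleftrightarrow> sqrt 3 * t < 1"
proof -
  have "2 * arctan t < pi / 3 \<longleftrightarrow> arctan t < arctan (1 / sqrt 3)"
    unfolding arctan_inverse_sqrt3 by linarith
  also have "\<dots> \<longleftrightarrow> sqrt 3 * t < 1"
    by (simp add: arctan_less_iff field_simps)
  finally show ?thesis .
qed

lemma pi_div_3_less_two_arctan_iff: "pi / 3 < 2 * arctan t \<longleftrightarrow> 1 < sqrt 3 * t"
proof -
  have "pi / 3 < 2 * arctan t \<longleftrightarrow> arctan (1 / sqrt 3) < arctan t"
    unfolding arctan_inverse_sqrt3 by linarith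
  also have "\<dots> \<longleftrightarrow> 1 < sqrt 3 * t"
    by (simp add: arctan_less_iff field_simps)
  finally show ?thesis .
qed

theorem theorem3:
  fixes a12 a34 d :: real
    and A1 A2 A3 A4 M12 M34 F F12 F34 O12 O34 :: "real \<times> real"
  assumes pos: "a12 > 0" "a34 > 0" "d > 0"
    and dmax: "d > max a12 a34"
    and A1_def: "A1 = (- a12 / 2, d)"
    and A2_def: "A2 = (a12 / 2, d)"
    and A4_def: "A4 = (- a34 / 2, 0)"
    and A3_def: "A3 = (a34 / 2, 0)"
    and M12_def: "M12 = (0, d)"
    and M34_def: "M34 = (0, 0)"
    and F: "F \<in> closed_segment A1 A3" "F \<in> closed_segment A2 A4"
    and F12: "is_orthocenter F12 A1 F A2"
    and F34: "is_orthocenter F34 A4 F A3"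
    and O12: "O12 \<in> closed_segment M12 M34" "angle A1 O12 A2 = 2 * pi / 3"
    and O34: "O34 \<in> closed_segment M12 M34" "angle A4 O34 A3 = 2 * pi / 3"
  shows "let \<theta> = angle A1 F A2;
             w = 2 * sin (\<theta> / 2);
             lminT = 2 * dist A1 F12 + 2 * dist A3 F34 + w * dist F12 F34;
             lminST = 2 * dist A1 O12 + 2 * dist A3 O34 + dist O12 O34
         in (0 < \<theta> \<and> \<theta> < pi / 3 \<longrightarrow> lminT < lminST) \<and>
            (pi / 3 < \<theta> \<and> \<theta> < pi / 2 \<longrightarrow> lminT > lminST)"
proof -
  define p q t where "p = a12 / 2" and "q = a34 / 2" and "t = (p + q) / d"
  have "0 < p" "0 < q" "0 < d" "0 < t" "t \<le> 1" "p + q = d * t"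
    using pos dmax by (simp_all add: p_def q_def t_def field_simps)
  have "t \<le> sqrt 3"
    using \<open>t \<le> 1\<close> real_sqrt_ge_one[of 3] by linarith
  have A: "A1 = (-p, d)" "A2 = (p, d)" "A3 = (q, 0)" "A4 = (-q, 0)"
    by (simp_all add: A1_def A2_def A3_def A4_def p_def q_def)
  note construction = trapezium_construction_tree[OF \<open>0 < p\<close> \<open>0 < q\<close> \<open>0 < t\<close> \<open>t \<le> 1\<close>
      \<open>p + q = d * t\<close> F[unfolded A] F12[unfolded A] F34[unfolded A], folded A]
  note steiner = trapezium_steiner_tree[OF \<open>0 < p\<close> \<open>0 < q\<close> \<open>0 < t\<close> \<open>t \<le> sqrt 3\<close>
      \<open>p + q = d * t\<close> O12[unfolded A M12_def M34_def] O34[unfolded A M12_def M34_def], folded A]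
  show ?thesis
    unfolding Let_def construction(2) steiner
    unfolding construction(1) two_arctan_less_pi_div_3_iff pi_div_3_less_two_arctan_iff
  proof (intro conjI impI; elim conjE)
    assume "sqrt 3 * t < 1"
    then show "d * (4 * t / sqrt (1 + t^2)) < d * (1 + sqrt 3 * t)"
      using \<open>0 < d\<close> \<open>0 < t\<close> by (intro mult_strict_left_mono construction_tree_shorter) simp_all
  next
    assume "1 < sqrt 3 * t"
    then show "d * (1 + sqrt 3 * t) < d * (4 * t / sqrt (1 + t^2))"
      using \<open>0 < d\<close> \<open>t \<le> 1\<close> by (intro mult_strict_left_mono construction_tree_longer) simp_all
  qed
qed

end
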